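(* Let $m\ge 2$ and $c\ge 1$. Then the best-worst rule $s=(c,m)$ admits no non-convergent Nash equilibrium.
   Context: Setting: voters' ideal points are distributed uniformly (unit mass, Lebesgue measure) on the issue space $[0,1]$. There are $m\ge 2$ candidates; a profile is $x=(x_1,\dots,x_m)\in[0,1]^m$, where $x_i$ is the platform of candidate $i$. A voter with ideal point $y$ ranks candidates by distance $|x_i-y|$ (closer is better); ties are broken by a fair lottery (uniformly random strict order among tied candidates). Fix $c\ge 0$. Under the best-worst rule $s=(c,m)$, a candidate receives $1$ point from each voter ranking her first, $-c$ points from each voter ranking her last ($m$-th), and $0$ otherwise. Candidate $i$'s score $v_i(x)$ is the expected total number of points received. A (pure-strategy Nash) equilibrium is a profile $x^*$ with $v_i(x^* )\ge v_i(t,x^*_{-i})$ for all $i$ and $t\in[0,1]$, where $(t,x_{-i})$ denotes $x$ with $x_i$ replaced by $t$. A non-convergent Nash equilibrium (NCNE) is an equilibrium in which at least two platforms are distinct. *)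

theory Defs
  imports "HOL-Analysis.Analysis"
begin

text \<open>Candidates are indexed by 0..m-1; a profile is x :: nat => real (only x 0 .. x (m-1) matter). A voter at y ranks candidates by distance; ties broken by a uniformly
random strict order among tied candidates, so candidate i is ranked first with probability
1/|argmin| if i is in the argmin of distances, and last with probability 1/|argmax| if i is in
the argmax.\<close>

definition closest_set :: "nat \<Rightarrow> (nat \<Rightarrow> real) \<Rightarrow> real \<Rightarrow> nat set" where
  "closest_set m x y = {j. j < m \<and> (\<forall>k<m. \<bar>x j - y\<bar> \<le> \<bar>x k - y\<bar>)}"

definition farthest_set :: "nat \<Rightarrow> (nat \<Rightarrow> real) \<Rightarrow> real \<Rightarrow> nat set" where
  "farthest_set m x y = {j. j < m \<and> (\<forall>k<m. \<bar>x k - y\<bar> \<le> \<bar>x j - y\<bar>)}"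

definition prob_first :: "nat \<Rightarrow> (nat \<Rightarrow> real) \<Rightarrow> nat \<Rightarrow> real \<Rightarrow> real" where
  "prob_first m x i y = (if i \<in> closest_set m x y then 1 / real (card (closest_set m x y)) else 0)"

definition prob_last :: "nat \<Rightarrow> (nat \<Rightarrow> real) \<Rightarrow> nat \<Rightarrow> real \<Rightarrow> real" where
  "prob_last m x i y = (if i \<in> farthest_set m x y then 1 / real (card (farthest_set m x y)) else 0)"

definition bw_score :: "real \<Rightarrow> nat \<Rightarrow> (nat \<Rightarrow> real) \<Rightarrow> nat \<Rightarrow> real" where
  "bw_score c m x i = integral {0..1} (\<lambda>y. prob_first m x i y - c * prob_last m x i y)"

definition is_profile :: "nat \<Rightarrow> (nat \<Rightarrow> real) \<Rightarrow> bool" where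
  "is_profile m x \<longleftrightarrow> (\<forall>i<m. x i \<in> {0..1})"

definition is_nash_eq :: "real \<Rightarrow> nat \<Rightarrow> (nat \<Rightarrow> real) \<Rightarrow> bool" where
  "is_nash_eq c m x \<longleftrightarrow> is_profile m x \<and>
     (\<forall>i<m. \<forall>t\<in>{0..1}. bw_score c m (x(i := t)) i \<le> bw_score c m x i)"

definition is_NCNE :: "real \<Rightarrow> nat \<Rightarrow> (nat \<Rightarrow> real) \<Rightarrow> bool" where
  "is_NCNE c m x \<longleftrightarrow> is_nash_eq c m x \<and> (\<exists>i<m. \<exists>j<m. x i \<noteq> x j)"

end

theory Submission
  imports Defs
begin

text \<open>Every voter awards exactly one first place and one last place, so the scores of all
candidates add up to \<open>1 - c \<le> 0\<close>. In an equilibrium no candidate stands alone against a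
common position of all her opponents: moving halfway towards them, no voter's contribution to
her score decreases, and the voters just beyond her new position switch from ranking her last
to ranking her first. Hence every candidate has two opponents at distinct positions; moving
strictly between two adjacent ones she is never ranked last and uniquely first near her new
position, so every equilibrium score is positive, contradicting the sum.\<close>

lemma uniform_weight_le_one:
  assumes "finite S"
  shows "(if i \<in> S then 1 / real (card S) else 0) \<le> 1"
proof (cases "i \<in> S")
  case True
  then have "1 \<le> card S" using assms by (metis card_0_eq empty_iff less_one not_le)
  then show ?thesis using True by simp
qed simp

lemma sum_uniform_weight:
  assumes "finite A" "S \<subseteq> A" "S \<noteq> {}"
  shows "(\<Sum>i\<in>A. if i \<in> S then 1 / real (card S) else 0) = 1"
  using assms finite_subset[OF assms(2)] by (simp add: sum.If_cases Int_absorb1)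

lemma borel_measurable_uniform_weight:
  assumes "finite A" "\<And>j. Measurable.pred M (P j)"
  shows "(\<lambda>y. if i \<in> {j\<in>A. P j y} then 1 / real (card {j\<in>A. P j y}) else 0) \<in> borel_measurable M"
proof -
  have card: "real (card {j\<in>A. P j y}) = (\<Sum>j\<in>A. if P j y then 1 else 0)" for y
    using assms(1) by (simp add: sum.If_cases Collect_conj_eq Int_commute)
  have "{y \<in> space M. i \<in> {j\<in>A. P j y}} \<in> sets M"
    using assms(2)[of i] by (cases "i \<in> A") (simp_all add: pred_def)
  then show ?thesis
    unfolding card using assms(2)
    by (intro measurable_If borel_measurable_divide borel_measurable_sum measurable_const) simp_all
qed

lemma bounded_borel_measurable_integrable_on_interval:
  fixes f :: "real \<Rightarrow> real"
  assumes "f \<in> borel_measurable borel" "\<And>y. \<bar>f y\<bar> \<le> B"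
  shows "f integrable_on {a..b}"
proof (rule measurable_bounded_by_integrable_imp_integrable[where g="\<lambda>_. B"])
  show "f \<in> borel_measurable (lebesgue_on {a..b})"
    using assms(1) by (intro measurable_restrict_space1 measurable_completion) simp
qed (use assms in auto)

lemma integral_ge_subinterval_length:
  fixes f :: "real \<Rightarrow> real"
  assumes "f integrable_on {a..b}" "lo \<le> hi" "{lo..hi} \<subseteq> {a..b}"
    and "\<And>y. y \<in> {a..b} \<Longrightarrow> 0 \<le> f y" "\<And>y. y \<in> {lo..hi} \<Longrightarrow> 1 \<le> f y"
  shows "hi - lo \<le> integral {a..b} f"
proof -
  have f_sub: "f integrable_on {lo..hi}"
    using assms(1,3) by (rule integrable_subinterval_real)
  have "hi - lo = integral {lo..hi} (\<lambda>_. 1::real)" using assms(2) by simp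
  also have "\<dots> \<le> integral {lo..hi} f"
    using f_sub assms(5) by (intro integral_le) auto
  also have "\<dots> \<le> integral {a..b} f"
    using assms(1,3,4) f_sub by (intro integral_subset_le) auto
  finally show ?thesis .
qed

lemma obtain_adjacent_below:
  fixes x :: "'a \<Rightarrow> real"
  assumes "finite A" "j \<in> A" "k \<in> A" "x j < x k"
  obtains j' where "j' \<in> A" "x j' < x k" "\<And>l. l \<in> A \<Longrightarrow> x l \<le> x j' \<or> x k \<le> x l"
proof -
  obtain j' where "is_arg_min (\<lambda>l. - x l) (\<lambda>l. l \<in> {l\<in>A. x l < x k}) j'"
    using ex_is_arg_min_if_finite[of "{l\<in>A. x l < x k}" "\<lambda>l. - x l"] assms by auto
  then show ?thesis
    by (intro that) (auto simp: is_arg_min_linorder not_less)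
qed

lemma closest_set_nonempty:
  assumes "0 < m"
  shows "closest_set m x y \<noteq> {}"
proof -
  obtain j where "is_arg_min (\<lambda>j. \<bar>x j - y\<bar>) (\<lambda>j. j \<in> {..<m}) j"
    using ex_is_arg_min_if_finite[of "{..<m}"] assms by blast
  then show ?thesis by (auto simp: is_arg_min_linorder closest_set_def)
qed

lemma farthest_set_nonempty:
  assumes "0 < m"
  shows "farthest_set m x y \<noteq> {}"
proof -
  obtain j where "is_arg_min (\<lambda>j. - \<bar>x j - y\<bar>) (\<lambda>j. j \<in> {..<m}) j"
    using ex_is_arg_min_if_finite[of "{..<m}"] assms by blast
  then show ?thesis by (auto simp: is_arg_min_linorder farthest_set_def)
qed

lemma prob_first_bounds: "0 \<le> prob_first m x i y" "prob_first m x i y \<le> 1"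
  using uniform_weight_le_one[of "closest_set m x y" i]
  by (simp_all add: prob_first_def closest_set_def)

lemma prob_last_bounds: "0 \<le> prob_last m x i y" "prob_last m x i y \<le> 1"
  using uniform_weight_le_one[of "farthest_set m x y" i]
  by (simp_all add: prob_last_def farthest_set_def)

lemma sum_prob_first: "0 < m \<Longrightarrow> (\<Sum>i<m. prob_first m x i y) = 1"
  using closest_set_nonempty[of m x y] unfolding prob_first_def
  by (intro sum_uniform_weight) (auto simp: closest_set_def)

lemma sum_prob_last: "0 < m \<Longrightarrow> (\<Sum>i<m. prob_last m x i y) = 1"
  using farthest_set_nonempty[of m x y] unfolding prob_last_def
  by (intro sum_uniform_weight) (auto simp: farthest_set_def)

lemma prob_first_borel_measurable: "prob_first m x i \<in> borel_measurable borel"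
proof -
  have "Measurable.pred borel (\<lambda>y. \<forall>k<m. \<bar>x j - y\<bar> \<le> \<bar>x k - y\<bar>)" for j
    by (intro Collect_closed_imp_pred_borel closed_Collect_all closed_Collect_imp
        open_Collect_const closed_Collect_le continuous_intros)
  then show ?thesis
    using borel_measurable_uniform_weight[where A="{..<m}" and i=i]
    unfolding prob_first_def[abs_def] closest_set_def by simp
qed

lemma prob_last_borel_measurable: "prob_last m x i \<in> borel_measurable borel"
proof -
  have "Measurable.pred borel (\<lambda>y. \<forall>k<m. \<bar>x k - y\<bar> \<le> \<bar>x j - y\<bar>)" for j
    by (intro Collect_closed_imp_pred_borel closed_Collect_all closed_Collect_imp
        open_Collect_const closed_Collect_le continuous_intros)
  then show ?thesis
    using borel_measurable_uniform_weight[where A="{..<m}" and i=i]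
    unfolding prob_last_def[abs_def] farthest_set_def by simp
qed

definition bw_payoff :: "real \<Rightarrow> nat \<Rightarrow> (nat \<Rightarrow> real) \<Rightarrow> nat \<Rightarrow> real \<Rightarrow> real" where
  "bw_payoff c m x i y = prob_first m x i y - c * prob_last m x i y"

lemma bw_score_eq_integral_payoff: "bw_score c m x i = integral {0..1} (bw_payoff c m x i)"
  by (simp add: bw_score_def bw_payoff_def[abs_def])

lemma bw_payoff_bounds:
  assumes "0 \<le> c"
  shows "- c \<le> bw_payoff c m x i y" "bw_payoff c m x i y \<le> 1"
proof -
  have "0 \<le> c * prob_last m x i y" "c * prob_last m x i y \<le> c"
    using prob_last_bounds[of m x i y] assms by (simp_all add: mult_left_le)
  then show "- c \<le> bw_payoff c m x i y" "bw_payoff c m x i y \<le> 1"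
    using prob_first_bounds[of m x i y] by (simp_all add: bw_payoff_def)
qed

lemma bw_payoff_integrable: "bw_payoff c m x i integrable_on {a..b}"
proof (rule bounded_borel_measurable_integrable_on_interval)
  show "bw_payoff c m x i \<in> borel_measurable borel"
    unfolding bw_payoff_def[abs_def]
    using prob_first_borel_measurable prob_last_borel_measurable by measurable
  show "\<bar>bw_payoff c m x i y\<bar> \<le> 1 + \<bar>c\<bar>" for y
  proof -
    have "\<bar>c * prob_last m x i y\<bar> \<le> \<bar>c\<bar>"
      using prob_last_bounds[of m x i y] by (simp add: abs_mult mult_left_le)
    then show ?thesis
      using prob_first_bounds[of m x i y] abs_triangle_ineq4[of "prob_first m x i y"]
      by (simp add: bw_payoff_def)
  qed
qed

lemma sum_bw_score:
  assumes "0 < m"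
  shows "(\<Sum>i<m. bw_score c m x i) = 1 - c"
proof -
  have "(\<Sum>i<m. bw_score c m x i) = integral {0..1} (\<lambda>y. \<Sum>i<m. bw_payoff c m x i y)"
    unfolding bw_score_eq_integral_payoff
    by (rule integral_sum[symmetric]) (simp_all add: bw_payoff_integrable)
  also have "(\<lambda>y. \<Sum>i<m. bw_payoff c m x i y) = (\<lambda>y. 1 - c)"
    using sum_prob_first[OF assms] sum_prob_last[OF assms]
    by (simp add: bw_payoff_def sum_subtractf sum_distrib_left[symmetric])
  finally show ?thesis by simp
qed

lemma prob_first_eq_1_if_uniquely_closest:
  assumes "i < m" "\<And>k. k < m \<Longrightarrow> k \<noteq> i \<Longrightarrow> \<bar>x i - y\<bar> < \<bar>x k - y\<bar>"
  shows "prob_first m x i y = 1"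
proof -
  have "closest_set m x y = {i}"
    unfolding closest_set_def using assms by (force simp: not_le)
  then show ?thesis unfolding prob_first_def by simp
qed

lemma prob_last_eq_1_if_uniquely_farthest:
  assumes "i < m" "\<And>k. k < m \<Longrightarrow> k \<noteq> i \<Longrightarrow> \<bar>x k - y\<bar> < \<bar>x i - y\<bar>"
  shows "prob_last m x i y = 1"
proof -
  have "farthest_set m x y = {i}"
    unfolding farthest_set_def using assms by (force simp: not_le)
  then show ?thesis unfolding prob_last_def by simp
qed

lemma prob_first_eq_0_if_closer:
  assumes "k < m" "\<bar>x k - y\<bar> < \<bar>x i - y\<bar>"
  shows "prob_first m x i y = 0"
  using assms unfolding prob_first_def closest_set_def by (auto simp: not_le)

lemma prob_last_eq_0_if_farther:
  assumes "k < m" "\<bar>x i - y\<bar> < \<bar>x k - y\<bar>"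
  shows "prob_last m x i y = 0"
  using assms unfolding prob_last_def farthest_set_def by (auto simp: not_le)

lemma lone_candidate_gains_by_moving_halfway:
  assumes "0 \<le> c" "i < m" "k < m" "k \<noteq> i"
    and others: "\<And>j. j < m \<Longrightarrow> j \<noteq> i \<Longrightarrow> x j = x k"
    and "x i \<noteq> x k" "x i \<in> {0..1}" "x k \<in> {0..1}"
  shows "bw_score c m x i < bw_score c m (x(i := (x i + x k) / 2)) i"
proof -
  define t where "t = (x i + x k) / 2"
  define x' where "x' = x(i := t)"
  define D where "D = x k - t"
  define lo where "lo = t + D / 4 - \<bar>D\<bar> / 8"
  define hi where "hi = t + D / 4 + \<bar>D\<bar> / 8"
  have D: "D \<noteq> 0" "x i = t - D" "x k = t + D"
    using assms(6) by (auto simp: D_def t_def)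
  have x': "x' i = t" "\<And>j. j < m \<Longrightarrow> j \<noteq> i \<Longrightarrow> x' j = x k"
    using others by (auto simp: x'_def)
  have win: "bw_payoff c m x' i y = 1" if "\<bar>t - y\<bar> < \<bar>x k - y\<bar>" for y
  proof -
    have "prob_first m x' i y = 1"
      using that x' by (intro prob_first_eq_1_if_uniquely_closest[OF assms(2)]) auto
    moreover have "prob_last m x' i y = 0"
      using that x' assms(3,4) by (intro prob_last_eq_0_if_farther[OF assms(3)]) auto
    ultimately show ?thesis by (simp add: bw_payoff_def)
  qed
  have lose: "bw_payoff c m x i y = - c" if "\<bar>x k - y\<bar> < \<bar>x i - y\<bar>" for y
  proof -
    have "prob_first m x i y = 0"
      using that by (intro prob_first_eq_0_if_closer[OF assms(3)])
    moreover have "prob_last m x i y = 1"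
      using that others by (intro prob_last_eq_1_if_uniquely_farthest[OF assms(2)]) auto
    ultimately show ?thesis by (simp add: bw_payoff_def)
  qed
  have "\<bar>t - y\<bar> < \<bar>x k - y\<bar> \<or> \<bar>x k - y\<bar> < \<bar>x i - y\<bar>" for y
    using D by (auto simp: abs_if)
  then have gain: "0 \<le> bw_payoff c m x' i y - bw_payoff c m x i y" for y
    using win lose bw_payoff_bounds[OF assms(1)] by (smt (verit))
  \<comment> \<open>voters between \<open>t\<close> and the midpoint of \<open>t\<close> and \<open>x k\<close> switch from ranking \<open>i\<close> last to first\<close>
  have gain_lo_hi: "1 \<le> bw_payoff c m x' i y - bw_payoff c m x i y" if "y \<in> {lo..hi}" for y
  proof -
    have "t + D / 4 - \<bar>D\<bar> / 8 \<le> y" "y \<le> t + D / 4 + \<bar>D\<bar> / 8"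
      using that by (simp_all add: lo_def hi_def)
    then have "\<bar>t - y\<bar> < \<bar>x k - y\<bar>" "\<bar>x k - y\<bar> < \<bar>x i - y\<bar>"
      using D(1) unfolding D(2,3) by (cases "0 < D"; simp add: abs_if; linarith)+
    then show ?thesis using win lose assms(1) by simp
  qed
  have "{lo..hi} \<subseteq> {0..1}"
    using assms(7,8) D unfolding lo_def hi_def by (auto simp: abs_if)
  then have "hi - lo \<le> integral {0..1} (\<lambda>y. bw_payoff c m x' i y - bw_payoff c m x i y)"
    using gain gain_lo_hi
    by (intro integral_ge_subinterval_length integrable_diff bw_payoff_integrable)
      (auto simp: lo_def hi_def)
  also have "\<dots> = bw_score c m x' i - bw_score c m x i"
    by (simp add: bw_score_eq_integral_payoff integral_diff bw_payoff_integrable)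
  finally show ?thesis
    using D(1) unfolding hi_def lo_def x'_def t_def by simp
qed

lemma score_pos_halfway_between_adjacent:
  assumes "i < m" "j < m" "j \<noteq> i" "k < m" "k \<noteq> i" "x j < x k"
    and adjacent: "\<And>l. l < m \<Longrightarrow> l \<noteq> i \<Longrightarrow> x l \<le> x j \<or> x k \<le> x l"
    and "0 \<le> x j" "x k \<le> 1"
  shows "0 < bw_score c m (x(i := (x j + x k) / 2)) i"
proof -
  define t where "t = (x j + x k) / 2"
  define x' where "x' = x(i := t)"
  define d where "d = (x k - x j) / 8"
  have d: "0 < d" "x j = t - 4 * d" "x k = t + 4 * d"
    using assms(6) by (simp_all add: d_def t_def field_simps)
  have x': "x' i = t" "\<And>l. l \<noteq> i \<Longrightarrow> x' l = x l"
    by (simp_all add: x'_def)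
  have never_last: "prob_last m x' i y = 0" for y
  proof (cases "y \<le> t")
    case True
    then show ?thesis
      using d x' assms(5) by (intro prob_last_eq_0_if_farther[OF assms(4)]) (simp add: abs_if)
  next
    case False
    then show ?thesis
      using d x' assms(3) by (intro prob_last_eq_0_if_farther[OF assms(2)]) (simp add: abs_if)
  qed
  have "bw_payoff c m x' i y = 1" if "y \<in> {t - d..t + d}" for y
  proof -
    have "\<bar>x' i - y\<bar> < \<bar>x' l - y\<bar>" if "l < m" "l \<noteq> i" for l
      using adjacent[OF that] \<open>y \<in> {t - d..t + d}\<close> d x' that(2) by (auto simp: abs_if)
    then show ?thesis
      using never_last prob_first_eq_1_if_uniquely_closest[OF assms(1)] by (simp add: bw_payoff_def)
  qed
  moreover have "0 \<le> bw_payoff c m x' i y" for y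
    using never_last prob_first_bounds by (simp add: bw_payoff_def)
  moreover have "{t - d..t + d} \<subseteq> {0..1}"
    using assms(8,9) d by auto
  ultimately have "(t + d) - (t - d) \<le> integral {0..1} (bw_payoff c m x' i)"
    using d(1) by (intro integral_ge_subinterval_length bw_payoff_integrable) auto
  then show ?thesis
    using d(1) unfolding bw_score_eq_integral_payoff x'_def t_def by simp
qed

lemma nash_eq_no_lone_candidate:
  assumes "is_nash_eq c m x" "0 \<le> c" "i < m" "k < m" "k \<noteq> i"
    and others: "\<And>j. j < m \<Longrightarrow> j \<noteq> i \<Longrightarrow> x j = x k"
  shows "x i = x k"
proof (rule ccontr)
  assume ne: "x i \<noteq> x k"
  have pos: "x i \<in> {0..1}" "x k \<in> {0..1}"
    using assms(1,3,4) by (simp_all add: is_nash_eq_def is_profile_def)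
  have "bw_score c m x i < bw_score c m (x(i := (x i + x k) / 2)) i"
    by (rule lone_candidate_gains_by_moving_halfway[OF assms(2-5) others ne pos])
  moreover have "bw_score c m (x(i := (x i + x k) / 2)) i \<le> bw_score c m x i"
    using assms(1,3) pos by (simp add: is_nash_eq_def)
  ultimately show False by simp
qed

lemma nash_eq_score_pos:
  assumes "is_nash_eq c m x" "i < m" "j < m" "j \<noteq> i" "k < m" "k \<noteq> i" "x j < x k"
  shows "0 < bw_score c m x i"
proof -
  obtain j' where j': "j' \<in> {l. l < m \<and> l \<noteq> i}" "x j' < x k"
    and adjacent: "\<And>l. l \<in> {l. l < m \<and> l \<noteq> i} \<Longrightarrow> x l \<le> x j' \<or> x k \<le> x l"
    by (rule obtain_adjacent_below[of "{l. l < m \<and> l \<noteq> i}" j k x]) (use assms(3-7) in simp_all)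
  have pos: "x j' \<in> {0..1}" "x k \<in> {0..1}"
    using assms(1,5) j'(1) by (simp_all add: is_nash_eq_def is_profile_def)
  have "0 < bw_score c m (x(i := (x j' + x k) / 2)) i"
    using j' adjacent pos
    by (intro score_pos_halfway_between_adjacent[OF assms(2) _ _ assms(5,6)]) simp_all
  also have "\<dots> \<le> bw_score c m x i"
    using assms(1,2) pos by (simp add: is_nash_eq_def)
  finally show ?thesis .
qed

theorem proposition2:
  fixes m :: nat and c :: real
  assumes "m \<ge> 2" and "c \<ge> 1"
  shows "\<not> (\<exists>x. is_NCNE c m x)"
proof
  assume "\<exists>x. is_NCNE c m x"
  then obtain x a b where nash: "is_nash_eq c m x" and ab: "a < m" "b < m" "x a \<noteq> x b"
    by (auto simp: is_NCNE_def)
  have "0 < bw_score c m x i" if i: "i < m" for i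
  proof -
    obtain k where k: "k < m" "k \<noteq> i"
      using assms(1) by (intro that[of "if i = 0 then 1 else 0"]) auto
    show ?thesis
    proof (cases "\<forall>j<m. j \<noteq> i \<longrightarrow> x j = x k")
      case True
      then have "x i = x k"
        using nash_eq_no_lone_candidate[OF nash _ i k] assms(2) by simp
      with True have "x a = x b" using ab(1,2) by metis
      with ab(3) show ?thesis by simp
    next
      case False
      then obtain j where "j < m" "j \<noteq> i" "x j \<noteq> x k" by blast
      then show ?thesis
        using nash_eq_score_pos[OF nash i] k by (cases "x j < x k") auto
    qed
  qed
  moreover have "{..<m} \<noteq> {}"
    using ab(1) by blast
  ultimately have "0 < (\<Sum>i<m. bw_score c m x i)"
    by (intro sum_pos) auto
  then show False
    using sum_bw_score[of m c x] assms by simp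
qed

end
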